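(* Let $(a(j,n))_{n\in\mathbf N}$, $j=1,\dots,d$, be $d$ unbounded sequences of positive integers, each satisfying a linear recurrence. Then there exist an integer $p\ge1$, real numbers $\lambda(j,l)\ge1$ and integers $d(j,l)\ge0$ for $j=1,\dots,d$ and $l=0,\dots,p$, and a strictly increasing sequence $(n_k)_{k\in\mathbf N}$ of nonnegative integers such that: (i) for every $j$ and every $l=0,\dots,p$, $a(j,pn_k+l)\approx\lambda(j,l)^{n_k}\,n_k^{d(j,l)}$; (ii) for every $j$ there exists $l\in\{0,\dots,p\}$ with $\lambda(j,l)>1$ or $d(j,l)\ge1$; (iii) for every $j$, $\lambda(j,0)=\lambda(j,p)$ and $d(j,0)=d(j,p)$.
   Context: For sequences of positive reals $(\alpha_k)$, $(\beta_k)$, write $\alpha_k\approx\beta_k$ if there is a constant $C>0$ with $\lim_{k\to\infty}\alpha_k/\beta_k=C$. A sequence $(a_n)$ satisfies a linear recurrence if $a_{n+K}=c_1a_{n+K-1}+\dots+c_Ka_n$ for all $n$, for some $K\ge1$ and complex $c_i$. *)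

theory Defs
  imports Complex_Main
begin

definition asymp_approx :: "(nat \<Rightarrow> real) \<Rightarrow> (nat \<Rightarrow> real) \<Rightarrow> bool" where
  "asymp_approx \<alpha> \<beta> \<longleftrightarrow> (\<exists>C>0. (\<lambda>k. \<alpha> k / \<beta> k) \<longlonglongrightarrow> C)"

definition lin_rec :: "(nat \<Rightarrow> complex) \<Rightarrow> bool" where
  "lin_rec a \<longleftrightarrow> (\<exists>K\<ge>1. \<exists>c :: nat \<Rightarrow> complex.
      \<forall>n. a (n + K) = (\<Sum>i=1..K. c i * a (n + K - i)))"

end

theory Submission
  imports Defs "HOL-Computational_Algebra.Fundamental_Theorem_Algebra" "HOL-Analysis.Analysis"
begin

(* A linear recurrence sequence is an exponential polynomial
   a(n) = \<Sum> P_\<nu>(n) \<nu>^n for large n: its characteristic polynomial factors into linear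
   factors E - z of the shift E (fundamental theorem of algebra), and each first-order equation
   f(n+1) = z f(n) + g(n) preserves exponential polynomials.  Represent all d sequences over a
   common finite set of bases V and choose p such that the p-th powers B = V^p are nondegenerate
   (no quotient of two distinct ones is a root of unity).  On the residue class n = p m + l every
   sequence is then an exponential sum over B, and after normalisation by \<rho>^m m^D (largest
   modulus \<rho>, largest degree D at that modulus) it is, up to o(1), a finite sum of unimodular
   exponentials  \<Sum> c_\<beta> u_\<beta>^m.  A Vandermonde argument plus a compactness (Dirichlet-type)
   argument yield one subsequence m_k along which all these finitely many sums converge to nonzero
   limits; positivity of the sequences makes the limits positive reals and forces \<rho> \<ge> 1.
   The classes l = 0 and l = p differ by an index shift, which preserves (\<rho>, D); and if every
   class had \<rho> = 1, D = 0 the sequence would be bounded. *)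

section \<open>Exponential polynomials\<close>

definition exp_sum :: "complex set \<Rightarrow> (complex \<Rightarrow> complex poly) \<Rightarrow> nat \<Rightarrow> complex" where
  "exp_sum B Q n = (\<Sum>\<beta>\<in>B. poly (Q \<beta>) (of_nat n) * \<beta> ^ n)"

definition exp_poly_rep :: "(nat \<Rightarrow> complex) \<Rightarrow> complex set \<Rightarrow> (complex \<Rightarrow> complex poly) \<Rightarrow> nat \<Rightarrow> bool" where
  "exp_poly_rep f V P N \<longleftrightarrow> finite V \<and> 0 \<notin> V \<and> (\<forall>n\<ge>N. f n = exp_sum V P n)"

definition exp_poly :: "(nat \<Rightarrow> complex) \<Rightarrow> bool" where
  "exp_poly f \<longleftrightarrow> (\<exists>V P N. exp_poly_rep f V P N)"

lemma exp_poly_rep_extend: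
  assumes "exp_poly_rep f V P N" "V \<subseteq> W" "finite W" "0 \<notin> W"
  shows "exp_poly_rep f W (\<lambda>\<nu>. if \<nu> \<in> V then P \<nu> else 0) N"
proof -
  have "exp_sum W (\<lambda>\<nu>. if \<nu> \<in> V then P \<nu> else 0) n = exp_sum V P n" for n
    unfolding exp_sum_def using assms by (intro sum.mono_neutral_cong_right) auto
  then show ?thesis using assms unfolding exp_poly_rep_def by auto
qed

lemma exp_poly_add:
  assumes "exp_poly f" "exp_poly g" shows "exp_poly (\<lambda>n. f n + g n)"
proof -
  obtain V1 P1 N1 V2 P2 N2 where r1: "exp_poly_rep f V1 P1 N1" and r2: "exp_poly_rep g V2 P2 N2"
    using assms unfolding exp_poly_def by blast
  let ?W = "V1 \<union> V2"
  have W: "finite ?W" "0 \<notin> ?W" using r1 r2 by (auto simp: exp_poly_rep_def)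
  obtain Q1 Q2 where q1: "exp_poly_rep f ?W Q1 N1" and q2: "exp_poly_rep g ?W Q2 N2"
    using exp_poly_rep_extend[OF r1 _ W] exp_poly_rep_extend[OF r2 _ W] by blast
  have "exp_poly_rep (\<lambda>n. f n + g n) ?W (\<lambda>\<nu>. Q1 \<nu> + Q2 \<nu>) (max N1 N2)"
    using q1 q2 W unfolding exp_poly_rep_def exp_sum_def by (auto simp: sum.distrib distrib_right)
  then show ?thesis unfolding exp_poly_def by blast
qed

lemma exp_poly_eventually_eq:
  assumes "exp_poly f" "\<And>n. n \<ge> M \<Longrightarrow> g n = f n" shows "exp_poly g"
proof -
  obtain V P N where "exp_poly_rep f V P N" using assms(1) unfolding exp_poly_def by blast
  then have "exp_poly_rep g V P (max N M)" using assms(2) unfolding exp_poly_rep_def by auto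
  then show ?thesis unfolding exp_poly_def by blast
qed

lemma exp_poly_eventually_zero:
  assumes "\<And>n. n \<ge> M \<Longrightarrow> g n = 0" shows "exp_poly g"
proof -
  have "exp_poly_rep g {} (\<lambda>_. 0) M" using assms unfolding exp_poly_rep_def exp_sum_def by auto
  then show ?thesis unfolding exp_poly_def by blast
qed

lemma exp_poly_term:
  assumes "\<nu> \<noteq> 0" shows "exp_poly (\<lambda>n. poly r (of_nat n) * \<nu> ^ n)"
proof -
  have "exp_poly_rep (\<lambda>n. poly r (of_nat n) * \<nu> ^ n) {\<nu>} (\<lambda>_. r) 0"
    using assms unfolding exp_poly_rep_def exp_sum_def by auto
  then show ?thesis unfolding exp_poly_def by blast
qed

lemma exp_poly_sum:
  assumes "finite A" "\<And>i. i \<in> A \<Longrightarrow> exp_poly (f i)" shows "exp_poly (\<lambda>n. \<Sum>i\<in>A. f i n)"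
  using assms
proof (induction A rule: finite_induct)
  case empty
  then show ?case using exp_poly_eventually_zero[of 0] by simp
next
  case (insert x F)
  then show ?case using exp_poly_add[of "f x" "\<lambda>n. \<Sum>i\<in>F. f i n"] by simp
qed

text \<open>The operator \<open>E - \<mu>\<close> (with \<open>E\<close> the shift) maps \<open>r(n) \<nu>^n\<close> to \<open>(\<nu> r(n+1) - \<mu> r(n)) \<nu>^n\<close>;
  \<open>shift_diff \<nu> \<mu> r\<close> is the polynomial in parentheses.\<close>
definition shift_diff :: "complex \<Rightarrow> complex \<Rightarrow> complex poly \<Rightarrow> complex poly" where
  "shift_diff \<nu> \<mu> r = smult \<nu> (r \<circ>\<^sub>p [:1,1:]) - smult \<mu> r"

lemma poly_shift_diff: "poly (shift_diff \<nu> \<mu> r) x = \<nu> * poly r (x + 1) - \<mu> * poly r x"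
  by (simp add: shift_diff_def poly_pcompose add.commute)

lemma shift_diff_add: "shift_diff \<nu> \<mu> (a + b) = shift_diff \<nu> \<mu> a + shift_diff \<nu> \<mu> b"
  by (simp add: shift_diff_def pcompose_add smult_add_right)

lemma monom_pcompose_linear: "monom (a::complex) s \<circ>\<^sub>p [:1,1:] = smult a ([:1,1:] ^ s)"
  by (rule poly_ext) (simp add: poly_pcompose poly_monom add.commute poly_power)

text \<open>Any prescribed leading coefficient in degree \<open>s\<close> is attained by \<open>shift_diff\<close> without
  exceeding degree \<open>s\<close>: if \<open>\<nu> \<noteq> \<mu>\<close> use \<open>r = a x^s\<close>, if \<open>\<nu> = \<mu>\<close> the top terms cancel and
  \<open>r = a x^(s+1)\<close> is needed.\<close>
lemma shift_diff_top_coeff: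
  assumes "\<nu> \<noteq> 0"
  shows "\<exists>r. degree (shift_diff \<nu> \<mu> r) \<le> s \<and> coeff (shift_diff \<nu> \<mu> r) s = c"
proof -
  have dpow: "degree ([:1,1:] ^ k :: complex poly) \<le> k" for k
    using degree_power_le[of "[:1,1::complex:]" k] by simp
  show ?thesis
  proof (cases "\<nu> = \<mu>")
    case True
    define a where "a = c / (\<mu> * of_nat (Suc s))"
    define X where "X = ([:1,1:] ^ Suc s - monom 1 (Suc s) :: complex poly)"
    have T: "shift_diff \<nu> \<mu> (monom a (Suc s)) = smult (\<mu> * a) X"
      using True by (simp add: shift_diff_def monom_pcompose_linear X_def smult_diff_right smult_monom)
    have "degree X \<le> Suc s" unfolding X_def
      by (meson degree_diff_le degree_monom_le dpow)
    moreover have "coeff X (Suc s) = 0" unfolding X_def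
      using coeff_linear_power[of "1::complex" "Suc s"] by simp
    ultimately have "X = 0 \<or> degree X < Suc s" by (metis le_neq_implies_less leading_coeff_0_iff)
    then have dX: "degree X \<le> s" by auto
    have cX: "coeff X s = of_nat (Suc s)" unfolding X_def
      using coeff_linear_poly_power[of s "Suc s" "1::complex" 1] by simp
    have "degree (shift_diff \<nu> \<mu> (monom a (Suc s))) \<le> s"
      using T dX by (metis degree_smult_le order_trans)
    moreover have "coeff (shift_diff \<nu> \<mu> (monom a (Suc s))) s = c"
      using T cX True assms by (simp add: a_def del: of_nat_Suc)
    ultimately show ?thesis by blast
  next
    case False
    define a where "a = c / (\<nu> - \<mu>)"
    have T: "shift_diff \<nu> \<mu> (monom a s) = smult (\<nu> * a) ([:1,1:] ^ s) - smult \<mu> (monom a s)"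
      by (simp add: shift_diff_def monom_pcompose_linear)
    have "degree (shift_diff \<nu> \<mu> (monom a s)) \<le> s" unfolding T
      by (meson degree_diff_le degree_monom_le dpow degree_smult_le order_trans)
    moreover have "coeff (shift_diff \<nu> \<mu> (monom a s)) s = (\<nu> - \<mu>) * a"
      unfolding T using coeff_linear_power[of "1::complex" s] by (simp add: algebra_simps)
    ultimately show ?thesis using False by (auto simp: a_def)
  qed
qed

lemma shift_diff_surj:
  assumes "\<nu> \<noteq> 0" shows "\<exists>r. shift_diff \<nu> \<mu> r = q"
proof -
  have "\<forall>q. (q = 0 \<or> degree q < s) \<longrightarrow> (\<exists>r. shift_diff \<nu> \<mu> r = q)" for s
  proof (induction s)
    case 0
    then show ?case by (auto intro: exI[of _ 0] simp: shift_diff_def)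
  next
    case (Suc s)
    show ?case
    proof (intro allI impI)
      fix q :: "complex poly" assume q: "q = 0 \<or> degree q < Suc s"
      obtain r0 where r0: "degree (shift_diff \<nu> \<mu> r0) \<le> s" "coeff (shift_diff \<nu> \<mu> r0) s = coeff q s"
        using shift_diff_top_coeff[OF assms] by blast
      define q' where "q' = q - shift_diff \<nu> \<mu> r0"
      have "degree q' \<le> s" using r0 q unfolding q'_def
        by (metis degree_diff_le less_Suc_eq_le zero_le degree_0)
      moreover have "coeff q' s = 0" using r0 unfolding q'_def by simp
      ultimately have "q' = 0 \<or> degree q' < s"
        by (metis le_neq_implies_less leading_coeff_0_iff)
      then obtain r1 where "shift_diff \<nu> \<mu> r1 = q'" using Suc.IH by blast
      then have "shift_diff \<nu> \<mu> (r0 + r1) = q" by (simp add: shift_diff_add q'_def)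
      then show "\<exists>r. shift_diff \<nu> \<mu> r = q" by blast
    qed
  qed
  then show ?thesis by (meson lessI)
qed

lemma exp_poly_particular_solution:
  assumes "exp_poly g"
  shows "\<exists>h N. exp_poly h \<and> (\<forall>n\<ge>N. h (Suc n) - \<mu> * h n = g n)"
proof -
  obtain V P N where r: "exp_poly_rep g V P N" using assms unfolding exp_poly_def by blast
  have V: "finite V" "0 \<notin> V" using r unfolding exp_poly_rep_def by auto
  have "\<forall>\<nu>\<in>V. \<exists>r. shift_diff \<nu> \<mu> r = P \<nu>" using V shift_diff_surj by metis
  then obtain R where R: "\<And>\<nu>. \<nu> \<in> V \<Longrightarrow> shift_diff \<nu> \<mu> (R \<nu>) = P \<nu>" by metis
  define h where "h = exp_sum V R"
  have "exp_poly h" unfolding h_def exp_sum_def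
    by (rule exp_poly_sum[OF V(1)]) (use V in \<open>auto intro: exp_poly_term\<close>)
  moreover have "h (Suc n) - \<mu> * h n = g n" if "n \<ge> N" for n
  proof -
    have summand: "poly (R \<nu>) (of_nat (Suc n)) * \<nu> ^ Suc n - \<mu> * (poly (R \<nu>) (of_nat n) * \<nu> ^ n)
          = poly (P \<nu>) (of_nat n) * \<nu> ^ n" if "\<nu> \<in> V" for \<nu>
    proof -
      have "poly (R \<nu>) (of_nat (Suc n)) * \<nu> ^ Suc n - \<mu> * (poly (R \<nu>) (of_nat n) * \<nu> ^ n)
          = (\<nu> * poly (R \<nu>) (of_nat n + 1) - \<mu> * poly (R \<nu>) (of_nat n)) * \<nu> ^ n"
        by (simp add: add.commute mult_ac right_diff_distrib)
      also have "\<dots> = poly (P \<nu>) (of_nat n) * \<nu> ^ n"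
        using poly_shift_diff[of \<nu> \<mu> "R \<nu>" "of_nat n"] R[OF that] by simp
      finally show ?thesis .
    qed
    have "h (Suc n) - \<mu> * h n
        = (\<Sum>\<nu>\<in>V. poly (R \<nu>) (of_nat (Suc n)) * \<nu> ^ Suc n - \<mu> * (poly (R \<nu>) (of_nat n) * \<nu> ^ n))"
      unfolding h_def exp_sum_def by (simp add: sum_distrib_left sum_subtractf)
    also have "\<dots> = (\<Sum>\<nu>\<in>V. poly (P \<nu>) (of_nat n) * \<nu> ^ n)"
      using summand by (rule sum.cong[OF refl])
    also have "\<dots> = exp_sum V P n" unfolding exp_sum_def ..
    also have "\<dots> = g n" using r that unfolding exp_poly_rep_def by simp
    finally show ?thesis .
  qed
  ultimately show ?thesis by blast
qed

lemma exp_poly_eventually_geometric: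
  assumes "\<And>n. n \<ge> N \<Longrightarrow> e (Suc n) = \<mu> * e n"
  shows "exp_poly e"
proof -
  have eN: "e (N + k) = \<mu> ^ k * e N" for k
    by (induction k) (auto simp: assms)
  show ?thesis
  proof (cases "\<mu> = 0")
    case True
    have "e n = 0" if "n \<ge> Suc N" for n
      using eN[of "n - N"] that True by (simp add: zero_power)
    then show ?thesis by (rule exp_poly_eventually_zero)
  next
    case False
    have "e n = poly [:e N / \<mu> ^ N:] (of_nat n) * \<mu> ^ n" if "n \<ge> N" for n
      using eN[of "n - N"] that False by (simp add: power_diff)
    then show ?thesis by (rule exp_poly_eventually_eq[OF exp_poly_term[OF False]])
  qed
qed

lemma exp_poly_first_order:
  assumes "exp_poly g" "\<And>n. f (Suc n) = \<mu> * f n + g n"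
  shows "exp_poly f"
proof -
  obtain h N where h: "exp_poly h" and hrec: "\<And>n. n \<ge> N \<Longrightarrow> h (Suc n) - \<mu> * h n = g n"
    using exp_poly_particular_solution[OF assms(1)] by blast
  have "(f (Suc n) - h (Suc n)) = \<mu> * (f n - h n)" if "n \<ge> N" for n
    using hrec[OF that] assms(2)[of n] by (simp add: algebra_simps)
  then have "exp_poly (\<lambda>n. f n - h n)" by (rule exp_poly_eventually_geometric)
  from exp_poly_add[OF this h] show ?thesis by simp
qed

section \<open>Linear recurrence sequences are exponential polynomials\<close>

text \<open>\<open>apply_shift ch b\<close> is the sequence obtained by applying the operator \<open>ch(E)\<close> to \<open>b\<close>,
  where \<open>E\<close> is the shift \<open>(E b)(n) = b(n+1)\<close>.\<close>
definition apply_shift :: "complex poly \<Rightarrow> (nat \<Rightarrow> complex) \<Rightarrow> nat \<Rightarrow> complex" where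
  "apply_shift ch b n = (\<Sum>i\<le>degree ch. coeff ch i * b (n + i))"

lemma apply_shift_upto:
  "degree ch < M \<Longrightarrow> apply_shift ch b n = (\<Sum>i<M. coeff ch i * b (n + i))"
  unfolding apply_shift_def by (intro sum.mono_neutral_cong_left) (auto simp: coeff_eq_0)

lemma apply_shift_linear_factor:
  "apply_shift ([:-\<mu>,1:] * q) b n = apply_shift q (\<lambda>m. b (Suc m) - \<mu> * b m) n"
proof -
  define M where "M = Suc (degree q)"
  have d1: "degree ([:-\<mu>,1:] * q) < Suc M"
    using degree_mult_le[of "[:-\<mu>,1:]" q] unfolding M_def by simp
  have cf: "coeff ([:-\<mu>,1:] * q) i = (case i of 0 \<Rightarrow> 0 | Suc j \<Rightarrow> coeff q j) - \<mu> * coeff q i" for i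
    by (cases i) (simp_all add: mult_pCons_left coeff_pCons)
  have qM: "coeff q M = 0" unfolding M_def by (simp add: coeff_eq_0)
  have "apply_shift ([:-\<mu>,1:] * q) b n = (\<Sum>i<Suc M. coeff ([:-\<mu>,1:] * q) i * b (n + i))"
    by (rule apply_shift_upto[OF d1])
  also have "\<dots> = (\<Sum>i<Suc M. (case i of 0 \<Rightarrow> 0 | Suc j \<Rightarrow> coeff q j) * b (n + i))
                 - \<mu> * (\<Sum>i<Suc M. coeff q i * b (n + i))"
    by (simp only: cf left_diff_distrib mult.assoc sum_subtractf sum_distrib_left)
  also have "(\<Sum>i<Suc M. (case i of 0 \<Rightarrow> 0 | Suc j \<Rightarrow> coeff q j) * b (n + i))
           = (\<Sum>i<M. coeff q i * b (Suc (n + i)))"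
    by (subst sum.lessThan_Suc_shift) simp
  also have "(\<Sum>i<Suc M. coeff q i * b (n + i)) = (\<Sum>i<M. coeff q i * b (n + i))"
    using qM by simp
  also have "(\<Sum>i<M. coeff q i * b (Suc (n + i))) - \<mu> * (\<Sum>i<M. coeff q i * b (n + i))
           = (\<Sum>i<M. coeff q i * (b (Suc (n + i)) - \<mu> * b (n + i)))"
    by (simp add: sum_distrib_left sum_subtractf algebra_simps)
  also have "\<dots> = apply_shift q (\<lambda>m. b (Suc m) - \<mu> * b m) n"
    by (rule apply_shift_upto[symmetric]) (simp add: M_def)
  finally show ?thesis .
qed

text \<open>A sequence annihilated by a nonzero operator \<open>ch(E)\<close> is an exponential polynomial:
  split off a linear factor \<open>E - z\<close> of \<open>ch\<close> (fundamental theorem of algebra), apply induction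
  to \<open>(E - z) b\<close> and solve the resulting first-order recurrence.\<close>
lemma annihilated_imp_exp_poly:
  "ch \<noteq> 0 \<Longrightarrow> (\<forall>n. apply_shift ch b n = 0) \<Longrightarrow> exp_poly b"
proof (induction "degree ch" arbitrary: ch b rule: less_induct)
  case less
  show ?case
  proof (cases "degree ch = 0")
    case True
    have c0: "coeff ch 0 \<noteq> 0" using True less.prems(1) leading_coeff_0_iff by fastforce
    have "b n = 0" for n
      using less.prems(2) c0 True unfolding apply_shift_def by auto
    then show ?thesis using exp_poly_eventually_zero by blast
  next
    case False
    then have "\<not> constant (poly ch)" by (simp add: constant_degree)
    then obtain z where "poly ch z = 0" using fundamental_theorem_of_algebra by blast
    then obtain q where ch: "ch = [:-z,1:] * q" using poly_eq_0_iff_dvd dvdE by blast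
    have qnz: "q \<noteq> 0" using less.prems(1) ch by auto
    have "degree ([:-z,1:] * q) = degree [:-z,1:] + degree q"
      by (rule degree_mult_eq) (use qnz in auto)
    then have "degree ch = degree q + 1" using ch by simp
    then have "exp_poly (\<lambda>m. b (Suc m) - z * b m)"
      using less.hyps[of q] qnz less.prems(2) apply_shift_linear_factor ch by auto
    then show ?thesis by (rule exp_poly_first_order[where \<mu> = z]) simp
  qed
qed

text \<open>The characteristic polynomial \<open>x^K - \<Sum>i=1..K. c_i x^(K-i)\<close> annihilates a linear
  recurrence sequence.\<close>
lemma lin_rec_annihilated:
  assumes "lin_rec b" shows "\<exists>ch. ch \<noteq> 0 \<and> (\<forall>n. apply_shift ch b n = 0)"
proof -
  obtain K c where K: "K \<ge> 1" and rc: "\<And>n. b (n + K) = (\<Sum>i=1..K. c i * b (n + K - i))"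
    using assms unfolding lin_rec_def by blast
  define ch where "ch = monom 1 K - (\<Sum>i=1..K. monom (c i) (K - i))"
  have cf: "coeff ch j = (if j = K then 1 else 0) - (\<Sum>i=1..K. if K - i = j then c i else 0)" for j
    unfolding ch_def by (simp add: coeff_sum coeff_monom)
  have "(\<Sum>i=1..K. if K - i = K then c i else 0) = 0"
    using K by (intro sum.neutral) auto
  then have cK: "coeff ch K = 1" using cf[of K] by simp
  have "coeff ch j = 0" if "j > K" for j
  proof -
    have "(\<Sum>i=1..K. if K - i = j then c i else 0) = 0"
      using that by (intro sum.neutral) auto
    then show ?thesis using cf[of j] that by simp
  qed
  then have dg: "degree ch = K"
    using cK by (metis le_antisym degree_le le_degree one_neq_zero)
  have "apply_shift ch b n = 0" for n
  proof -
    have "apply_shift ch b n = (\<Sum>j\<le>K. (if j = K then 1 else 0) * b (n + j))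
            - (\<Sum>j\<le>K. (\<Sum>i=1..K. if K - i = j then c i else 0) * b (n + j))"
      unfolding apply_shift_def dg
      by (simp add: cf left_diff_distrib sum_subtractf del: mult_if_delta)
    also have "(\<Sum>j\<le>K. (if j = K then 1 else 0) * b (n + j)) = b (n + K)"
      by (simp add: if_distrib[of "\<lambda>x. x * b _"] cong: if_cong)
    also have "(\<Sum>j\<le>K. (\<Sum>i=1..K. if K - i = j then c i else 0) * b (n + j))
             = (\<Sum>i=1..K. \<Sum>j\<le>K. if K - i = j then c i * b (n + j) else 0)"
      by (subst sum.swap) (auto simp: sum_distrib_right intro!: sum.cong)
    also have "\<dots> = (\<Sum>i=1..K. c i * b (n + K - i))"
      by (rule sum.cong[OF refl]) auto
    finally show ?thesis using rc[of n] by simp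
  qed
  moreover have "ch \<noteq> 0" using cK by auto
  ultimately show ?thesis by blast
qed

lemma lin_rec_imp_exp_poly: "lin_rec b \<Longrightarrow> exp_poly b"
  using lin_rec_annihilated annihilated_imp_exp_poly by blast

lemma exp_poly_common_rep:
  assumes "finite J" "\<And>j. j \<in> J \<Longrightarrow> exp_poly (f j)"
  shows "\<exists>V P N. finite V \<and> 0 \<notin> V \<and> (\<forall>j\<in>J. exp_poly_rep (f j) V (P j) N)"
proof -
  have "\<forall>j\<in>J. \<exists>r. exp_poly_rep (f j) (fst r) (fst (snd r)) (snd (snd r))"
    using assms(2) unfolding exp_poly_def by auto
  then obtain r where r: "\<And>j. j \<in> J \<Longrightarrow> exp_poly_rep (f j) (fst (r j)) (fst (snd (r j))) (snd (snd (r j)))"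
    by (metis bchoice)
  define V where "V = (\<Union>j\<in>J. fst (r j))"
  define N where "N = (\<Sum>j\<in>J. snd (snd (r j)))"
  have V: "finite V" "0 \<notin> V" using r assms(1) unfolding V_def exp_poly_rep_def by auto
  define P where "P j \<nu> = (if \<nu> \<in> fst (r j) then fst (snd (r j)) \<nu> else 0)" for j \<nu>
  have "exp_poly_rep (f j) V (P j) N" if j: "j \<in> J" for j
  proof -
    have "exp_poly_rep (f j) V (P j) (snd (snd (r j)))"
      unfolding P_def by (rule exp_poly_rep_extend[OF r[OF j] _ V]) (use j in \<open>auto simp: V_def\<close>)
    moreover have "snd (snd (r j)) \<le> N" unfolding N_def using j assms(1) by (intro member_le_sum) auto
    ultimately show ?thesis unfolding exp_poly_rep_def by auto
  qed
  then show ?thesis using V by blast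
qed

section \<open>Residue classes and nondegenerate bases\<close>

text \<open>Along the residue class \<open>n \<mapsto> p n + l\<close> an exponential sum over \<open>V\<close> becomes an exponential
  sum over the \<open>p\<close>-th powers \<open>\<beta> = \<nu>^p\<close>; all \<open>\<nu>\<close> with the same \<open>\<nu>^p\<close> are collected into
  \<open>residue_poly V P p l \<beta>\<close>.\<close>
definition residue_poly ::
    "complex set \<Rightarrow> (complex \<Rightarrow> complex poly) \<Rightarrow> nat \<Rightarrow> nat \<Rightarrow> complex \<Rightarrow> complex poly" where
  "residue_poly V P p l \<beta> = (\<Sum>\<nu>\<in>{\<nu>\<in>V. \<nu>^p = \<beta>}. smult (\<nu>^l) (P \<nu> \<circ>\<^sub>p [:of_nat l, of_nat p:]))"

lemma exp_sum_residue_class: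
  assumes "finite V"
  shows "exp_sum V P (p*n+l) = exp_sum ((\<lambda>\<nu>. \<nu>^p) ` V) (residue_poly V P p l) n"
proof -
  let ?R = "\<lambda>\<nu>. smult (\<nu>^l) (P \<nu> \<circ>\<^sub>p [:of_nat l, of_nat p:])"
  have "poly (P \<nu>) (of_nat (p*n+l)) * \<nu> ^ (p*n+l) = poly (?R \<nu>) (of_nat n) * (\<nu>^p)^n" for \<nu>
  proof -
    have "(of_nat (p*n+l) :: complex) = of_nat l + of_nat n * of_nat p" by (simp add: algebra_simps)
    moreover have "\<nu> ^ (p*n+l) = \<nu>^l * (\<nu>^p)^n" by (simp add: power_add power_mult)
    ultimately show ?thesis by (simp add: poly_pcompose algebra_simps)
  qed
  then have "exp_sum V P (p*n+l) = (\<Sum>\<nu>\<in>V. poly (?R \<nu>) (of_nat n) * (\<nu>^p)^n)"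
    unfolding exp_sum_def by simp
  also have "\<dots> = (\<Sum>\<beta>\<in>(\<lambda>\<nu>. \<nu>^p) ` V. \<Sum>\<nu>\<in>{\<nu>\<in>V. \<nu>^p = \<beta>}. poly (?R \<nu>) (of_nat n) * (\<nu>^p)^n)"
    by (rule sum.image_gen[OF assms])
  also have "\<dots> = exp_sum ((\<lambda>\<nu>. \<nu>^p) ` V) (residue_poly V P p l) n"
    unfolding exp_sum_def residue_poly_def poly_sum sum_distrib_right
    by (intro sum.cong refl) auto
  finally show ?thesis .
qed

lemma exp_poly_rep_residue_class:
  assumes "exp_poly_rep f V P N" "p \<ge> 1" "n \<ge> N"
  shows "f (p * n + l) = exp_sum ((\<lambda>\<nu>. \<nu>^p) ` V) (residue_poly V P p l) n"
proof -
  have "p * n + l \<ge> N" using assms(2,3) by (metis le_add1 le_trans mult_le_mono1 mult_1)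
  then have "f (p * n + l) = exp_sum V P (p * n + l)"
    using assms(1) unfolding exp_poly_rep_def by simp
  also have "\<dots> = exp_sum ((\<lambda>\<nu>. \<nu>^p) ` V) (residue_poly V P p l) n"
    using assms(1) unfolding exp_poly_rep_def by (intro exp_sum_residue_class) simp
  finally show ?thesis .
qed

lemma smult_sum_right: "smult c (sum f A) = (\<Sum>i\<in>A. smult c (f i))"
  by (induction A rule: infinite_finite_induct) (simp_all add: smult_add_right)

lemma residue_poly_period:
  "residue_poly V P p p \<beta> = smult \<beta> (residue_poly V P p 0 \<beta> \<circ>\<^sub>p [:1,1:])"
proof -
  have c: "[:0, of_nat p:] \<circ>\<^sub>p [:1,1:] = ([:of_nat p, of_nat p:] :: complex poly)"
    by (simp add: pcompose_pCons)
  have "residue_poly V P p p \<beta> = (\<Sum>\<nu>\<in>{\<nu>\<in>V. \<nu>^p = \<beta>}. smult \<beta> (P \<nu> \<circ>\<^sub>p [:of_nat p, of_nat p:]))"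
    unfolding residue_poly_def by (rule sum.cong) auto
  also have "\<dots> = smult \<beta> (residue_poly V P p 0 \<beta> \<circ>\<^sub>p [:1,1:])"
    by (simp add: residue_poly_def smult_sum_right pcompose_sum pcompose_assoc[symmetric] c)
  finally show ?thesis .
qed

text \<open>A set of bases is nondegenerate if no quotient of two distinct elements is a root of unity.\<close>
definition nondegenerate :: "complex set \<Rightarrow> bool" where
  "nondegenerate B \<longleftrightarrow> (\<forall>\<beta>\<in>B. \<forall>\<beta>'\<in>B. \<forall>q\<ge>1. \<beta>^q = \<beta>'^q \<longrightarrow> \<beta> = \<beta>')"

text \<open>Passing to \<open>p\<close>-th powers for a suitable \<open>p\<close> makes any finite set nondegenerate:
  take \<open>p\<close> a common multiple of the orders of all roots of unity occurring as quotients.\<close>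
lemma exists_nondegenerate_power:
  fixes V :: "complex set" assumes "finite V"
  shows "\<exists>p\<ge>1. nondegenerate ((\<lambda>\<nu>. \<nu>^p) ` V)"
proof -
  define R where "R = {pr \<in> V \<times> V. \<exists>q\<ge>1. fst pr ^ q = snd pr ^ q}"
  define ord where "ord pr = (SOME q. q \<ge> 1 \<and> fst pr ^ q = snd pr ^ q)" for pr :: "complex \<times> complex"
  have ord: "ord pr \<ge> 1 \<and> fst pr ^ ord pr = snd pr ^ ord pr" if "pr \<in> R" for pr
  proof -
    have "\<exists>q. q \<ge> 1 \<and> fst pr ^ q = snd pr ^ q" using that R_def by auto
    then show ?thesis unfolding ord_def by (rule someI_ex)
  qed
  have finR: "finite R" using assms unfolding R_def by simp
  define p where "p = (\<Prod>pr\<in>R. ord pr)"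
  have p1: "p \<ge> 1" unfolding p_def using ord by (intro prod_ge_1) auto
  have "\<nu>^p = \<nu>'^p" if v: "\<nu> \<in> V" "\<nu>' \<in> V" and q: "q \<ge> 1" and e: "(\<nu>^p)^q = (\<nu>'^p)^q"
    for \<nu> \<nu>' q
  proof -
    have "\<nu> ^ (p*q) = \<nu>' ^ (p*q)" using e by (simp add: power_mult)
    moreover have "p * q \<ge> 1" using p1 q by simp
    ultimately have inR: "(\<nu>, \<nu>') \<in> R" unfolding R_def using v by (auto intro!: exI[of _ "p * q"])
    then have "ord (\<nu>, \<nu>') dvd p" unfolding p_def using finR by (rule dvd_prodI[rotated])
    then obtain k where k: "p = ord (\<nu>, \<nu>') * k" by (rule dvdE)
    have "\<nu> ^ ord (\<nu>, \<nu>') = \<nu>' ^ ord (\<nu>, \<nu>')" using ord[OF inR] by simp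
    then show ?thesis using k by (simp add: power_mult)
  qed
  then show ?thesis using p1 unfolding nondegenerate_def by blast
qed

section \<open>Dominant-term asymptotics of exponential sums\<close>

lemma norm_poly_le:
  fixes q :: "complex poly"
  shows "norm (poly q x) \<le> (\<Sum>i\<le>degree q. norm (coeff q i)) * (norm x + 1) ^ degree q"
proof -
  have "norm (poly q x) \<le> (\<Sum>i\<le>degree q. norm (coeff q i * x ^ i))"
    unfolding poly_altdef by (rule norm_sum)
  also have "\<dots> \<le> (\<Sum>i\<le>degree q. norm (coeff q i) * (norm x + 1) ^ degree q)"
  proof (rule sum_mono)
    fix i assume "i \<in> {..degree q}"
    then have i: "i \<le> degree q" by simp
    have "norm x ^ i \<le> (norm x + 1) ^ i" by (rule power_mono) auto
    also have "\<dots> \<le> (norm x + 1) ^ degree q" using i by (intro power_increasing) auto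
    finally have "norm x ^ i \<le> (norm x + 1) ^ degree q" .
    then show "norm (coeff q i * x ^ i) \<le> norm (coeff q i) * (norm x + 1) ^ degree q"
      by (simp add: norm_mult norm_power mult_left_mono)
  qed
  also have "\<dots> = (\<Sum>i\<le>degree q. norm (coeff q i)) * (norm x + 1) ^ degree q"
    by (simp add: sum_distrib_right)
  finally show ?thesis .
qed

lemma poly_times_geometric_tendsto_0:
  fixes s :: real
  assumes "0 \<le> s" "s < 1"
  shows "(\<lambda>n. (real n + 1) ^ e * s ^ n) \<longlonglongrightarrow> 0"
proof (cases "e = 0")
  case True
  then show ?thesis using assms by (simp add: LIMSEQ_power_zero)
next
  case False
  define r where "r = root e s"
  have r: "0 \<le> r" "r < 1" "r ^ e = s"
    using assms False unfolding r_def by (auto simp: real_root_ge_zero real_root_lt_1_iff real_root_pow_pos2)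
  have eq: "(real n + 1) ^ e * s ^ n = ((real n + 1) * r ^ n) ^ e" for n
    by (simp add: power_mult_distrib r(3)[symmetric] power_mult[symmetric] mult.commute)
  have "(\<lambda>n. real n * r ^ n + r ^ n) \<longlonglongrightarrow> 0 + 0"
    using powser_times_n_limit_0[of r] r by (intro tendsto_add) (auto simp: LIMSEQ_power_zero)
  then have "(\<lambda>n. ((real n + 1) * r ^ n) ^ e) \<longlonglongrightarrow> 0 ^ e"
    by (intro tendsto_power) (simp add: distrib_right)
  moreover have "(0::real) ^ e = 0" using False by simp
  ultimately show ?thesis by (simp only: eq)
qed

lemma poly_over_power_tendsto:
  fixes q :: "complex poly"
  assumes "degree q \<le> D"
  shows "(\<lambda>n. poly q (of_nat n) / of_nat n ^ D) \<longlonglongrightarrow> (if degree q = D then lead_coeff q else 0)"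
proof -
  have ev: "eventually (\<lambda>n. (\<Sum>i\<le>degree q. coeff q i * (inverse (of_nat n)) ^ (D - i))
                             = poly q (of_nat n) / of_nat n ^ D) sequentially"
  proof (rule eventually_sequentiallyI[of 1])
    fix n :: nat assume n: "n \<ge> 1"
    have "poly q (of_nat n) / of_nat n ^ D = (\<Sum>i\<le>degree q. coeff q i * (of_nat n ^ i / of_nat n ^ D))"
      unfolding poly_altdef by (simp add: sum_divide_distrib)
    also have "\<dots> = (\<Sum>i\<le>degree q. coeff q i * (inverse (of_nat n)) ^ (D - i))"
    proof (rule sum.cong[OF refl])
      fix i assume "i \<in> {..degree q}"
      then have "(of_nat n :: complex) ^ D = of_nat n ^ i * of_nat n ^ (D - i)"
        using assms by (simp add: power_add[symmetric])
      then show "coeff q i * (of_nat n ^ i / of_nat n ^ D) = coeff q i * (inverse (of_nat n)) ^ (D - i)"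
        using n by (simp add: power_inverse field_simps)
    qed
    finally show "(\<Sum>i\<le>degree q. coeff q i * (inverse (of_nat n)) ^ (D - i))
                  = poly q (of_nat n) / of_nat n ^ D" by simp
  qed
  have "(\<lambda>n. \<Sum>i\<le>degree q. coeff q i * (inverse (of_nat n :: complex)) ^ (D - i))
        \<longlonglongrightarrow> (\<Sum>i\<le>degree q. coeff q i * 0 ^ (D - i))"
    by (intro tendsto_intros lim_inverse_n)
  moreover have "(\<Sum>i\<le>degree q. coeff q i * (0::complex) ^ (D - i))
               = (\<Sum>i\<le>degree q. if i = D then coeff q i else 0)"
    using assms by (intro sum.cong refl) auto
  moreover have "(\<Sum>i\<le>degree q. if i = D then coeff q i else (0::complex))
               = (if degree q = D then lead_coeff q else 0)"
    using assms by auto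
  ultimately show ?thesis using ev by (auto intro: Lim_transform_eventually)
qed

lemma subdominant_term_tendsto_0:
  fixes q :: "complex poly" and z :: complex
  assumes "norm z < 1"
  shows "(\<lambda>n. poly q (of_nat n) / of_nat n ^ D * z ^ n) \<longlonglongrightarrow> 0"
proof -
  define A where "A = (\<Sum>i\<le>degree q. norm (coeff q i))"
  have "(\<lambda>n. A * ((real n + 1) ^ degree q * norm z ^ n)) \<longlonglongrightarrow> A * 0"
    using assms by (intro tendsto_mult tendsto_const poly_times_geometric_tendsto_0) auto
  then have lim: "(\<lambda>n. A * ((real n + 1) ^ degree q * norm z ^ n)) \<longlonglongrightarrow> 0" by simp
  have "norm (poly q (of_nat n) / of_nat n ^ D * z ^ n)
                 \<le> A * ((real n + 1) ^ degree q * norm z ^ n)" if "n \<ge> 1" for n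
  proof -
    have "norm (poly q (of_nat n) / of_nat n ^ D * z ^ n)
          = norm (poly q (of_nat n)) / real n ^ D * norm z ^ n"
      by (simp add: norm_mult norm_divide norm_power)
    also have "\<dots> \<le> norm (poly q (of_nat n)) * norm z ^ n"
    proof -
      have "real n ^ D \<ge> 1" using that by simp
      then have "norm (poly q (of_nat n)) / real n ^ D \<le> norm (poly q (of_nat n))"
        by (simp add: divide_le_eq order_trans[OF _ mult_left_mono[of 1]])
      then show ?thesis by (rule mult_right_mono) simp
    qed
    also have "\<dots> \<le> A * (real n + 1) ^ degree q * norm z ^ n"
      using norm_poly_le[of q "of_nat n"] unfolding A_def by (simp add: mult_right_mono)
    finally show ?thesis by (simp add: mult.assoc)
  qed
  then have "eventually (\<lambda>n. norm (poly q (of_nat n) / of_nat n ^ D * z ^ n)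
                 \<le> A * ((real n + 1) ^ degree q * norm z ^ n)) sequentially"
    by (rule eventually_sequentiallyI)
  then show ?thesis by (rule Lim_null_comparison[OF _ lim])
qed

lemma critical_term_tendsto:
  fixes q :: "complex poly" and z :: complex
  assumes "degree q \<le> D" "norm z = 1"
  shows "(\<lambda>n. (poly q (of_nat n) / of_nat n ^ D - (if degree q = D then lead_coeff q else 0)) * z ^ n)
         \<longlonglongrightarrow> 0"
proof -
  define Y where "Y n = poly q (of_nat n) / of_nat n ^ D - (if degree q = D then lead_coeff q else 0)"
    for n
  have lim: "(\<lambda>n. norm (Y n)) \<longlonglongrightarrow> 0"
    unfolding Y_def using poly_over_power_tendsto[OF assms(1)] by (intro tendsto_norm_zero LIM_zero)
  have "norm (Y n * z ^ n) \<le> norm (Y n)" for n using assms(2) by (simp add: norm_mult norm_power)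
  then have "eventually (\<lambda>n. norm (Y n * z ^ n) \<le> norm (Y n)) sequentially" by simp
  from Lim_null_comparison[OF this lim] show ?thesis unfolding Y_def .
qed

definition exp_support :: "complex set \<Rightarrow> (complex \<Rightarrow> complex poly) \<Rightarrow> complex set" where
  "exp_support B Q = {\<beta>\<in>B. Q \<beta> \<noteq> 0}"

definition dom_radius :: "complex set \<Rightarrow> (complex \<Rightarrow> complex poly) \<Rightarrow> real" where
  "dom_radius B Q = Max (norm ` exp_support B Q)"

definition dom_degree :: "complex set \<Rightarrow> (complex \<Rightarrow> complex poly) \<Rightarrow> nat" where
  "dom_degree B Q = Max ((\<lambda>\<beta>. degree (Q \<beta>)) ` {\<beta>\<in>exp_support B Q. norm \<beta> = dom_radius B Q})"

definition dom_bases :: "complex set \<Rightarrow> (complex \<Rightarrow> complex poly) \<Rightarrow> complex set" where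
  "dom_bases B Q = {\<beta>\<in>exp_support B Q. norm \<beta> = dom_radius B Q \<and> degree (Q \<beta>) = dom_degree B Q}"

definition dom_part :: "complex set \<Rightarrow> (complex \<Rightarrow> complex poly) \<Rightarrow> nat \<Rightarrow> complex" where
  "dom_part B Q n =
     (\<Sum>\<beta>\<in>dom_bases B Q. lead_coeff (Q \<beta>) * (\<beta> / of_real (dom_radius B Q)) ^ n)"

lemma dom_radius_ge:
  "finite B \<Longrightarrow> \<beta> \<in> exp_support B Q \<Longrightarrow> norm \<beta> \<le> dom_radius B Q"
  unfolding dom_radius_def exp_support_def by (intro Max_ge) auto

lemma dom_radius_attained:
  "finite B \<Longrightarrow> exp_support B Q \<noteq> {} \<Longrightarrow> \<exists>\<beta>\<in>exp_support B Q. norm \<beta> = dom_radius B Q"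
proof -
  assume "finite B" "exp_support B Q \<noteq> {}"
  then have "dom_radius B Q \<in> norm ` exp_support B Q"
    unfolding dom_radius_def exp_support_def by (intro Max_in) auto
  then show ?thesis by auto
qed

lemma dom_radius_pos:
  assumes "finite B" "0 \<notin> B" "exp_support B Q \<noteq> {}"
  shows "dom_radius B Q > 0"
proof -
  obtain \<beta> where "\<beta> \<in> exp_support B Q" "norm \<beta> = dom_radius B Q"
    using dom_radius_attained[OF assms(1,3)] by blast
  moreover have "\<beta> \<noteq> 0" using calculation(1) assms(2) unfolding exp_support_def by auto
  ultimately show ?thesis by (metis zero_less_norm_iff)
qed

lemma dom_degree_ge:
  "finite B \<Longrightarrow> \<beta> \<in> exp_support B Q \<Longrightarrow> norm \<beta> = dom_radius B Q \<Longrightarrow> degree (Q \<beta>) \<le> dom_degree B Q"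
  unfolding dom_degree_def exp_support_def by (intro Max_ge) auto

lemma dom_bases_nonempty:
  assumes "finite B" "exp_support B Q \<noteq> {}"
  shows "dom_bases B Q \<noteq> {}"
proof -
  let ?T = "{\<beta>\<in>exp_support B Q. norm \<beta> = dom_radius B Q}"
  have "?T \<noteq> {}" "finite ?T" using dom_radius_attained[OF assms] assms(1) by (auto simp: exp_support_def)
  then have "dom_degree B Q \<in> (\<lambda>\<beta>. degree (Q \<beta>)) ` ?T"
    unfolding dom_degree_def by (intro Max_in) auto
  then show ?thesis unfolding dom_bases_def by auto
qed

lemma dom_bases_subset: "dom_bases B Q \<subseteq> exp_support B Q" "exp_support B Q \<subseteq> B"
  unfolding dom_bases_def exp_support_def by auto

text \<open>Terms with \<open>|\<beta>| < \<rho>\<close> are negligible, terms with \<open>|\<beta>| = \<rho>\<close> contribute their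
  leading coefficient exactly when their degree is \<open>D\<close>.\<close>
lemma exp_sum_dominant:
  assumes B: "finite B" "0 \<notin> B" and nonempty: "exp_support B Q \<noteq> {}"
  defines "\<rho> \<equiv> dom_radius B Q" and "D \<equiv> dom_degree B Q"
  shows "(\<lambda>n. exp_sum B Q n / of_real (\<rho> ^ n * real n ^ D) - dom_part B Q n) \<longlonglongrightarrow> 0"
proof -
  have \<rho>: "\<rho> > 0" unfolding \<rho>_def using dom_radius_pos[OF B nonempty] .
  define T where "T n \<beta> = poly (Q \<beta>) (of_nat n) / of_nat n ^ D * (\<beta> / of_real \<rho>) ^ n
      - (if \<beta> \<in> dom_bases B Q then lead_coeff (Q \<beta>) * (\<beta> / of_real \<rho>) ^ n else 0)" for n \<beta>
  have split: "exp_sum B Q n / of_real (\<rho> ^ n * real n ^ D) - dom_part B Q n = (\<Sum>\<beta>\<in>B. T n \<beta>)" for n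
  proof -
    have "(\<Sum>\<beta>\<in>B. if \<beta> \<in> dom_bases B Q then lead_coeff (Q \<beta>) * (\<beta> / of_real \<rho>) ^ n else 0)
          = dom_part B Q n"
      unfolding dom_part_def \<rho>_def using B(1) dom_bases_subset[of B Q]
      by (intro sum.mono_neutral_cong_right) auto
    moreover have "poly (Q \<beta>) (of_nat n) * \<beta> ^ n / of_real (\<rho> ^ n * real n ^ D)
                   = poly (Q \<beta>) (of_nat n) / of_nat n ^ D * (\<beta> / of_real \<rho>) ^ n" for \<beta>
      by (simp add: power_divide)
    ultimately show ?thesis
      unfolding T_def exp_sum_def by (simp add: sum_subtractf sum_divide_distrib)
  qed
  have "(\<lambda>n. T n \<beta>) \<longlonglongrightarrow> 0" if "\<beta> \<in> B" for \<beta>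
  proof (cases "\<beta> \<in> exp_support B Q")
    case False
    then have "T n \<beta> = 0" for n using that dom_bases_subset unfolding T_def exp_support_def by auto
    then show ?thesis by simp
  next
    case supp: True
    have norm_z: "norm (\<beta> / of_real \<rho>) = norm \<beta> / \<rho>" using \<rho> by (simp add: norm_divide)
    show ?thesis
    proof (cases "norm \<beta> = \<rho>")
      case True
      have deg: "degree (Q \<beta>) \<le> D" unfolding D_def using dom_degree_ge[OF B(1) supp] True \<rho>_def by simp
      define c where "c = (if degree (Q \<beta>) = D then lead_coeff (Q \<beta>) else 0)"
      have T_eq: "T n \<beta> = (poly (Q \<beta>) (of_nat n) / of_nat n ^ D - c) * (\<beta> / of_real \<rho>) ^ n" for n
        using supp True unfolding T_def c_def dom_bases_def \<rho>_def D_def by (auto simp: algebra_simps)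
      have "norm (\<beta> / of_real \<rho>) = 1" using norm_z True \<rho> by simp
      then have "(\<lambda>n. (poly (Q \<beta>) (of_nat n) / of_nat n ^ D - c) * (\<beta> / of_real \<rho>) ^ n) \<longlonglongrightarrow> 0"
        unfolding c_def by (rule critical_term_tendsto[OF deg])
      then show ?thesis by (simp only: T_eq)
    next
      case False
      then have "norm \<beta> < \<rho>" using dom_radius_ge[OF B(1) supp] \<rho>_def by simp
      then have "norm (\<beta> / of_real \<rho>) < 1" using norm_z \<rho> by simp
      moreover have "\<beta> \<notin> dom_bases B Q" using False unfolding dom_bases_def \<rho>_def by simp
      ultimately show ?thesis
        unfolding T_def using subdominant_term_tendsto_0[of "\<beta> / of_real \<rho>" "Q \<beta>" D] by simp
    qed
  qed
  then have "(\<lambda>n. \<Sum>\<beta>\<in>B. T n \<beta>) \<longlonglongrightarrow> 0" by (rule tendsto_null_sum)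
  then show ?thesis by (simp only: split)
qed

text \<open>The dominant part is bounded, since all its bases have modulus \<open>\<rho>\<close>.\<close>
lemma dom_part_bounded:
  "norm (dom_part B Q n) \<le> (\<Sum>\<beta>\<in>dom_bases B Q. norm (lead_coeff (Q \<beta>)))"
proof -
  have "norm (dom_part B Q n)
        \<le> (\<Sum>\<beta>\<in>dom_bases B Q. norm (lead_coeff (Q \<beta>) * (\<beta> / of_real (dom_radius B Q)) ^ n))"
    unfolding dom_part_def by (rule norm_sum)
  also have "\<dots> \<le> (\<Sum>\<beta>\<in>dom_bases B Q. norm (lead_coeff (Q \<beta>)))"
  proof (rule sum_mono)
    fix \<beta> assume "\<beta> \<in> dom_bases B Q"
    then have "norm \<beta> = dom_radius B Q" unfolding dom_bases_def by simp
    moreover have "dom_radius B Q \<ge> 0" using calculation by (metis norm_ge_zero)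
    ultimately have "norm (\<beta> / of_real (dom_radius B Q)) \<le> 1"
      by (simp add: norm_divide divide_self_if)
    then have "norm (\<beta> / of_real (dom_radius B Q)) ^ n \<le> 1"
      by (simp add: power_le_one)
    then show "norm (lead_coeff (Q \<beta>) * (\<beta> / of_real (dom_radius B Q)) ^ n) \<le> norm (lead_coeff (Q \<beta>))"
      by (simp add: norm_mult norm_power mult_left_le)
  qed
  finally show ?thesis .
qed

lemma dom_data_shift:
  assumes "0 \<notin> B" "\<And>\<beta>. \<beta> \<in> B \<Longrightarrow> Q' \<beta> = smult \<beta> (Q \<beta> \<circ>\<^sub>p [:1,1:])"
  shows "dom_radius B Q' = dom_radius B Q" "dom_degree B Q' = dom_degree B Q"
proof -
  have nz: "\<beta> \<noteq> 0" if "\<beta> \<in> B" for \<beta> using assms(1) that by auto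
  have zero: "Q' \<beta> = 0 \<longleftrightarrow> Q \<beta> = 0" if "\<beta> \<in> B" for \<beta>
    using assms(2)[OF that] nz[OF that] by (simp add: pcompose_eq_0_iff)
  have supp: "exp_support B Q' = exp_support B Q"
    unfolding exp_support_def using zero by auto
  then show rad: "dom_radius B Q' = dom_radius B Q" unfolding dom_radius_def by simp
  have "degree (Q' \<beta>) = degree (Q \<beta>)" if "\<beta> \<in> B" for \<beta>
    using assms(2)[OF that] nz[OF that] by (simp add: degree_pcompose)
  then show "dom_degree B Q' = dom_degree B Q"
    unfolding dom_degree_def supp rad
    by (intro arg_cong[where f = Max] image_cong) (auto simp: exp_support_def)
qed

section \<open>Powers of unimodular numbers\<close>

text \<open>Finitely many unimodular numbers have simultaneously convergent powers along a
  subsequence (compactness of the unit circle).\<close>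
lemma unimodular_powers_convergent_subseq:
  fixes U :: "complex set" assumes "finite U" "\<forall>u\<in>U. norm u = 1"
  shows "\<exists>\<sigma>. strict_mono \<sigma> \<and> (\<forall>u\<in>U. convergent (\<lambda>k. u ^ \<sigma> k))"
  using assms
proof (induction U rule: finite_induct)
  case empty
  then show ?case using strict_mono_id by blast
next
  case (insert u0 U)
  obtain \<sigma> where s: "strict_mono \<sigma>" and c: "\<forall>u\<in>U. convergent (\<lambda>k. u ^ \<sigma> k)"
    using insert by auto
  have "bounded (range (\<lambda>k. u0 ^ \<sigma> k))"
    using insert.prems by (auto simp: bounded_iff norm_power intro!: exI[of _ 1])
  then obtain l r where r: "strict_mono r" and lim: "((\<lambda>k. u0 ^ \<sigma> k) \<circ> r) \<longlonglongrightarrow> l"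
    using bounded_imp_convergent_subsequence by blast
  have "convergent (\<lambda>k. u ^ (\<sigma> \<circ> r) k)" if "u \<in> insert u0 U" for u
  proof (cases "u = u0")
    case True
    then show ?thesis using lim by (auto simp: convergent_def o_def)
  next
    case False
    then have "convergent ((\<lambda>k. u ^ \<sigma> k) \<circ> r)"
      using c r that by (intro convergent_subseq_convergent) auto
    then show ?thesis by (simp add: o_def)
  qed
  moreover have "strict_mono (\<sigma> \<circ> r)" using s r by (simp add: strict_mono_o)
  ultimately show ?case by blast
qed

lemma strict_mono_ge_add:
  fixes \<sigma> :: "nat \<Rightarrow> nat" assumes "strict_mono \<sigma>" shows "\<sigma> k + d \<le> \<sigma> (k + d)"
proof (induction d)
  case (Suc d)
  have "\<sigma> (k + d) < \<sigma> (k + Suc d)" using assms by (simp add: strict_mono_def)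
  then show ?case using Suc by simp
qed simp

text \<open>Dirichlet-type approximation: arbitrarily large exponents \<open>q\<close> bring all \<open>u^q\<close>
  (\<open>|u| = 1\<close>, finitely many) within \<open>\<epsilon>\<close> of \<open>1\<close>; take the difference of two exponents of
  a convergent subsequence.\<close>
lemma unimodular_powers_near_1:
  fixes U :: "complex set"
  assumes U: "finite U" "\<forall>u\<in>U. norm u = 1" and \<epsilon>: "\<epsilon> > 0"
  shows "\<exists>q>L. \<forall>u\<in>U. norm (u ^ q - 1) < \<epsilon>"
proof -
  obtain \<sigma> where s: "strict_mono \<sigma>" and c: "\<forall>u\<in>U. convergent (\<lambda>k. u ^ \<sigma> k)"
    using unimodular_powers_convergent_subseq[OF U] by blast
  have "\<forall>u\<in>U. eventually (\<lambda>k. dist (u ^ \<sigma> k) (lim (\<lambda>k. u ^ \<sigma> k)) < \<epsilon> / 2) sequentially"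
  proof
    fix u assume "u \<in> U"
    then have "(\<lambda>k. u ^ \<sigma> k) \<longlonglongrightarrow> lim (\<lambda>k. u ^ \<sigma> k)" using c by (simp add: convergent_LIMSEQ_iff)
    moreover have "\<epsilon> / 2 > 0" using \<epsilon> by simp
    ultimately show "eventually (\<lambda>k. dist (u ^ \<sigma> k) (lim (\<lambda>k. u ^ \<sigma> k)) < \<epsilon> / 2) sequentially"
      by (rule tendstoD)
  qed
  then have "eventually (\<lambda>k. \<forall>u\<in>U. dist (u ^ \<sigma> k) (lim (\<lambda>k. u ^ \<sigma> k)) < \<epsilon> / 2) sequentially"
    using U(1) by (simp add: eventually_ball_finite)
  then obtain K where K: "\<And>k. k \<ge> K \<Longrightarrow> \<forall>u\<in>U. dist (u ^ \<sigma> k) (lim (\<lambda>k. u ^ \<sigma> k)) < \<epsilon> / 2"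
    unfolding eventually_sequentially by blast
  define k2 where "k2 = K + Suc L"
  have big: "\<sigma> K + Suc L \<le> \<sigma> k2" unfolding k2_def by (rule strict_mono_ge_add[OF s])
  define q where "q = \<sigma> k2 - \<sigma> K"
  have "norm (u ^ q - 1) < \<epsilon>" if u: "u \<in> U" for u
  proof -
    have "u ^ \<sigma> k2 - u ^ \<sigma> K = (u ^ q - 1) * u ^ \<sigma> K"
      using big by (simp add: q_def power_add[symmetric] algebra_simps)
    then have "norm (u ^ q - 1) = norm (u ^ \<sigma> k2 - u ^ \<sigma> K)"
      using U(2) u by (simp add: norm_mult norm_power)
    also have "\<dots> \<le> dist (u ^ \<sigma> k2) (lim (\<lambda>k. u ^ \<sigma> k)) + dist (u ^ \<sigma> K) (lim (\<lambda>k. u ^ \<sigma> k))"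
      by (metis dist_norm dist_triangle2)
    also have "\<dots> < \<epsilon> / 2 + \<epsilon> / 2"
      using K[of k2] K[of K] u unfolding k2_def by (intro add_strict_mono) auto
    finally show ?thesis by simp
  qed
  moreover have "q > L" using big unfolding q_def by simp
  ultimately show ?thesis by blast
qed

lemma strict_mono_choice:
  assumes "\<And>k L. \<exists>q>L. P k q"
  shows "\<exists>r::nat\<Rightarrow>nat. strict_mono r \<and> (\<forall>k. P k (r k))"
proof -
  define g where "g k L = (SOME q. q > L \<and> P k q)" for k L
  have g: "g k L > L \<and> P k (g k L)" for k L
    unfolding g_def using assms[of L k] by (rule someI_ex)
  define r where "r = rec_nat (g 0 0) (\<lambda>k rk. g (Suc k) rk)"
  have r0: "r 0 = g 0 0" and rS: "r (Suc k) = g (Suc k) (r k)" for k unfolding r_def by simp_all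
  have "strict_mono r" unfolding strict_mono_Suc_iff using g rS by simp
  moreover have "P k (r k)" for k by (cases k) (simp_all add: r0 rS g)
  ultimately show ?thesis by blast
qed

lemma unimodular_powers_tendsto_1:
  fixes U :: "complex set"
  assumes U: "finite U" "\<forall>u\<in>U. norm u = 1"
  shows "\<exists>qs. strict_mono qs \<and> (\<forall>u\<in>U. (\<lambda>k. u ^ qs k) \<longlonglongrightarrow> 1)"
proof -
  have "\<exists>q>L. \<forall>u\<in>U. norm (u ^ q - 1) < inverse (real (Suc k))" for k L
    by (rule unimodular_powers_near_1[OF U]) simp
  then obtain qs where qs: "strict_mono qs"
    and close: "\<And>k. \<forall>u\<in>U. norm (u ^ qs k - 1) < inverse (real (Suc k))"
    using strict_mono_choice[where P = "\<lambda>k q. \<forall>u\<in>U. norm (u ^ q - 1) < inverse (real (Suc k))"]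
    by blast
  have "(\<lambda>k. u ^ qs k) \<longlonglongrightarrow> 1" if u: "u \<in> U" for u
  proof -
    have "(\<lambda>k. u ^ qs k - 1) \<longlonglongrightarrow> 0"
      by (rule Lim_null_comparison[OF _ LIMSEQ_inverse_real_of_nat])
         (use close u in \<open>auto intro!: always_eventually less_imp_le\<close>)
    then show ?thesis by (simp add: LIM_zero_iff)
  qed
  then show ?thesis using qs by blast
qed

section \<open>Common non-vanishing of dominant parts\<close>

lemma vandermonde_zero:
  fixes x C :: "'a \<Rightarrow> complex"
  assumes "finite S" "inj_on x S" "\<forall>n<card S. (\<Sum>\<beta>\<in>S. C \<beta> * x \<beta> ^ n) = 0"
  shows "\<forall>\<beta>\<in>S. C \<beta> = 0"
  using assms
proof (induction S arbitrary: C rule: finite_induct)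
  case empty then show ?case by simp
next
  case (insert b S)
  define C' where "C' \<beta> = C \<beta> * (x \<beta> - x b)" for \<beta>
  have cS: "card (insert b S) = Suc (card S)" using insert.hyps by simp
  have "\<forall>n<card S. (\<Sum>\<beta>\<in>S. C' \<beta> * x \<beta> ^ n) = 0"
  proof (intro allI impI)
    fix n assume n: "n < card S"
    have h1: "(\<Sum>\<beta>\<in>insert b S. C \<beta> * x \<beta> ^ Suc n) = 0"
      and h0: "(\<Sum>\<beta>\<in>insert b S. C \<beta> * x \<beta> ^ n) = 0"
      using insert.prems(2) n cS by auto
    have "(\<Sum>\<beta>\<in>insert b S. C \<beta> * x \<beta> ^ Suc n) - x b * (\<Sum>\<beta>\<in>insert b S. C \<beta> * x \<beta> ^ n)
        = (\<Sum>\<beta>\<in>insert b S. C' \<beta> * x \<beta> ^ n)"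
      unfolding sum_distrib_left sum_subtractf[symmetric] C'_def
      by (rule sum.cong[OF refl]) (simp add: algebra_simps)
    also have "\<dots> = (\<Sum>\<beta>\<in>S. C' \<beta> * x \<beta> ^ n)"
      using insert.hyps by (simp add: C'_def)
    finally show "(\<Sum>\<beta>\<in>S. C' \<beta> * x \<beta> ^ n) = 0" using h1 h0 by simp
  qed
  then have "\<forall>\<beta>\<in>S. C' \<beta> = 0"
    using insert.IH[of C'] insert.prems(1) by (auto simp: inj_on_insert)
  moreover have "x \<beta> \<noteq> x b" if "\<beta> \<in> S" for \<beta>
    using that insert.prems(1) insert.hyps(2) by (simp add: inj_on_insert) (metis DiffI imageI singletonD)
  ultimately have CS: "\<forall>\<beta>\<in>S. C \<beta> = 0" unfolding C'_def by auto
  have "(\<Sum>\<beta>\<in>insert b S. C \<beta> * x \<beta> ^ 0) = 0" using insert.prems(2) cS by auto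
  then have "C b = 0" using insert.hyps CS by simp
  then show ?case using CS by simp
qed

lemma exp_sum_nonvanishing_in_progression:
  fixes u C :: "'b \<Rightarrow> complex"
  assumes S: "finite S" "S \<noteq> {}" and C: "\<forall>w\<in>S. C w \<noteq> 0" and u: "\<forall>w\<in>S. u w \<noteq> 0"
    and inj: "inj_on (\<lambda>w. u w ^ q) S"
  shows "\<exists>n<card S. (\<Sum>w\<in>S. C w * u w ^ (m + n * q)) \<noteq> 0"
proof (rule ccontr)
  assume "\<not> ?thesis"
  moreover have "C w * u w ^ (m + n * q) = (C w * u w ^ m) * (u w ^ q) ^ n" for w n
    by (simp add: power_add mult.commute[of n q] power_mult mult.assoc)
  ultimately have "\<forall>n<card S. (\<Sum>w\<in>S. (C w * u w ^ m) * (u w ^ q) ^ n) = 0"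
    by simp
  then have "\<forall>w\<in>S. C w * u w ^ m = 0"
    using vandermonde_zero[OF S(1) inj, of "\<lambda>w. C w * u w ^ m"] by blast
  then show False using S(2) C u by auto
qed

lemma exp_sum_nonvanishing_persists:
  fixes u :: "'b \<Rightarrow> complex" and Sf :: "'i \<Rightarrow> 'b set" and C :: "'i \<Rightarrow> 'b \<Rightarrow> complex"
  assumes W: "finite W" "\<forall>w\<in>W. norm (u w) = 1" and I: "finite I" "\<forall>i\<in>I. Sf i \<subseteq> W"
    and nz: "\<forall>i\<in>I. (\<Sum>w\<in>Sf i. C i w * u w ^ m) \<noteq> 0"
  shows "\<exists>q>0. \<forall>i\<in>I. \<forall>n<N. (\<Sum>w\<in>Sf i. C i w * u w ^ (m + n * q)) \<noteq> 0"
proof -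
  define G where "G i k = (\<Sum>w\<in>Sf i. C i w * u w ^ k)" for i k
  define \<delta> where "\<delta> = Min (insert 1 ((\<lambda>i. norm (G i m)) ` I))"
  have \<delta>: "\<delta> > 0" unfolding \<delta>_def using I(1) nz G_def by (subst Min_gr_iff) auto
  have \<delta>_le: "\<delta> \<le> norm (G i m)" if "i \<in> I" for i
    unfolding \<delta>_def using I(1) that by (intro Min_le) auto
  define K where "K = 1 + (\<Sum>i\<in>I. \<Sum>w\<in>Sf i. norm (C i w))"
  have K1: "K \<ge> 1" unfolding K_def by (simp add: sum_nonneg)
  have K: "(\<Sum>w\<in>Sf i. norm (C i w)) \<le> K" if "i \<in> I" for i
  proof -
    have "(\<Sum>w\<in>Sf i. norm (C i w)) \<le> (\<Sum>i\<in>I. \<Sum>w\<in>Sf i. norm (C i w))"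
      using I(1) that by (intro member_le_sum) (auto simp: sum_nonneg)
    then show ?thesis unfolding K_def by simp
  qed
  define \<epsilon> where "\<epsilon> = \<delta> / (2 * ((real N + 1) * K))"
  have \<epsilon>: "\<epsilon> > 0" unfolding \<epsilon>_def using \<delta> K1 by (simp add: add_pos_nonneg)
  obtain q where q: "q > 0" "\<forall>v\<in>u ` W. norm (v ^ q - 1) < \<epsilon>"
    using unimodular_powers_near_1[of "u ` W" \<epsilon> 0] W \<epsilon> by auto
  have "norm (G i (m + n * q) - G i m) \<le> \<delta> / 2" if i: "i \<in> I" and n: "n < N" for i n
  proof -
    have "G i (m + n * q) - G i m = (\<Sum>w\<in>Sf i. C i w * u w ^ m * ((u w ^ q) ^ n - 1))"
      unfolding G_def sum_subtractf[symmetric]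
      by (rule sum.cong[OF refl]) (simp add: power_add algebra_simps flip: power_mult)
    also have "norm \<dots> \<le> (\<Sum>w\<in>Sf i. norm (C i w) * ((real N + 1) * \<epsilon>))"
    proof (rule order_trans[OF norm_sum sum_mono])
      fix w assume "w \<in> Sf i"
      then have w: "w \<in> W" using I(2) i by auto
      have "norm ((u w ^ q) ^ n - 1 ^ n) \<le> real n * norm (u w ^ q - 1)"
        by (rule norm_power_diff) (use W w in \<open>auto simp: norm_power\<close>)
      also have "\<dots> \<le> (real N + 1) * \<epsilon>"
        using q(2) w n by (intro mult_mono) auto
      finally show "norm (C i w * u w ^ m * ((u w ^ q) ^ n - 1)) \<le> norm (C i w) * ((real N + 1) * \<epsilon>)"
        using W w by (simp add: norm_mult norm_power mult_left_mono)
    qed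
    also have "\<dots> \<le> K * ((real N + 1) * \<epsilon>)"
      unfolding sum_distrib_right[symmetric] using K[OF i] \<epsilon> by (intro mult_right_mono) auto
    also have "\<dots> = ((real N + 1) * K) * \<epsilon>" by (simp add: algebra_simps)
    also have "\<dots> = \<delta> / 2" unfolding \<epsilon>_def using K1 by simp
    finally show ?thesis .
  qed
  note close = this
  have "G i (m + n * q) \<noteq> 0" if "i \<in> I" "n < N" for i n
  proof
    assume "G i (m + n * q) = 0"
    then have "norm (G i m) \<le> \<delta> / 2" using close[OF that] by (metis diff_0 norm_minus_cancel)
    then show False using \<delta>_le[OF that(1)] \<delta> by simp
  qed
  then show ?thesis using q(1) unfolding G_def by blast
qed

text \<open>Finitely many exponential sums in unimodular bases, each with nonzero coefficients and
  bases with pairwise distinct \<open>q\<close>-th powers, have a common non-zero: induction on the number of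
  sums, using a Vandermonde argument along a progression for the new sum and stability for the
  old ones.\<close>
lemma exp_sums_common_nonzero:
  fixes u :: "'b \<Rightarrow> complex" and Sf :: "'i \<Rightarrow> 'b set" and C :: "'i \<Rightarrow> 'b \<Rightarrow> complex"
  assumes W: "finite W" "\<forall>w\<in>W. norm (u w) = 1" and I: "finite I"
    and S: "\<forall>i\<in>I. Sf i \<subseteq> W \<and> Sf i \<noteq> {}" and C: "\<forall>i\<in>I. \<forall>w\<in>Sf i. C i w \<noteq> 0"
    and inj: "\<forall>i\<in>I. \<forall>q\<ge>1. inj_on (\<lambda>w. u w ^ q) (Sf i)"
  shows "\<exists>m. \<forall>i\<in>I. (\<Sum>w\<in>Sf i. C i w * u w ^ m) \<noteq> 0"
  using I S C inj
proof (induction I rule: finite_induct)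
  case empty
  then show ?case by simp
next
  case (insert i0 I)
  obtain m where m: "\<forall>i\<in>I. (\<Sum>w\<in>Sf i. C i w * u w ^ m) \<noteq> 0"
    using insert.IH insert.prems by auto
  obtain q where q: "q > 0" "\<forall>i\<in>I. \<forall>n<card (Sf i0). (\<Sum>w\<in>Sf i. C i w * u w ^ (m + n * q)) \<noteq> 0"
    using exp_sum_nonvanishing_persists[OF W insert.hyps(1) _ m] insert.prems(1) by blast
  have S0: "finite (Sf i0)" "Sf i0 \<noteq> {}" "Sf i0 \<subseteq> W"
    using insert.prems(1) W(1) finite_subset by auto
  have "\<forall>w\<in>Sf i0. u w \<noteq> 0" using S0(3) W(2) by force
  then have "\<exists>n<card (Sf i0). (\<Sum>w\<in>Sf i0. C i0 w * u w ^ (m + n * q)) \<noteq> 0"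
    using insert.prems(2,3) q(1) by (intro exp_sum_nonvanishing_in_progression[OF S0(1,2)]) auto
  then obtain n where "n < card (Sf i0)" "(\<Sum>w\<in>Sf i0. C i0 w * u w ^ (m + n * q)) \<noteq> 0"
    by blast
  then show ?case using q(2) by blast
qed

section \<open>Asymptotics along a common subsequence\<close>

lemma nonneg_real_tendsto_complex:
  fixes x :: "nat \<Rightarrow> real"
  assumes lim: "(\<lambda>k. complex_of_real (x k)) \<longlonglongrightarrow> G" and "G \<noteq> 0" and "\<And>k. x k \<ge> 0"
  shows "x \<longlonglongrightarrow> Re G \<and> Re G > 0"
proof -
  have re: "x \<longlonglongrightarrow> Re G" using tendsto_Re[OF lim] by simp
  have "(\<lambda>k. 0) \<longlonglongrightarrow> Im G" using tendsto_Im[OF lim] by simp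
  then have "Im G = 0" using LIMSEQ_unique tendsto_const by blast
  moreover have "0 \<le> Re G" using LIMSEQ_le_const[OF re] assms(3) by blast
  ultimately show ?thesis using re \<open>G \<noteq> 0\<close> complex_eq_iff by force
qed

text \<open>If \<open>f \<ge> 1\<close> is asymptotically proportional to \<open>\<rho>^n n^D\<close> along a subsequence, then \<open>\<rho> \<ge> 1\<close>,
  since for \<open>\<rho> < 1\<close> the comparison sequence tends to \<open>0\<close>.\<close>
lemma growth_radius_ge_1:
  fixes f :: "nat \<Rightarrow> real"
  assumes lim: "(\<lambda>k. f (nk k) / (\<rho> ^ nk k * real (nk k) ^ D)) \<longlonglongrightarrow> c" and \<rho>: "\<rho> > 0"
    and nk: "filterlim nk at_top sequentially" and f: "\<And>n. f n \<ge> 1"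
  shows "\<rho> \<ge> 1"
proof (rule ccontr)
  assume "\<not> \<rho> \<ge> 1"
  then have "(\<lambda>n. (real n + 1) ^ D * \<rho> ^ n) \<longlonglongrightarrow> 0"
    using poly_times_geometric_tendsto_0[of \<rho> D] \<rho> by simp
  then have "(\<lambda>n. \<rho> ^ n * real n ^ D) \<longlonglongrightarrow> 0"
    by (rule Lim_null_comparison[rotated])
       (use \<rho> in \<open>auto intro!: always_eventually simp: abs_mult power_mono mult.commute mult_left_mono\<close>)
  then have den: "(\<lambda>k. \<rho> ^ nk k * real (nk k) ^ D) \<longlonglongrightarrow> 0"
    using filterlim_compose[OF _ nk] by blast
  have "eventually (\<lambda>k. nk k \<ge> 1) sequentially"
    using nk by (simp add: filterlim_at_top)
  then have "eventually (\<lambda>k. f (nk k) / (\<rho> ^ nk k * real (nk k) ^ D) * (\<rho> ^ nk k * real (nk k) ^ D)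
                             = f (nk k)) sequentially"
    by eventually_elim (use \<rho> in simp)
  with tendsto_mult[OF lim den] have "(\<lambda>k. f (nk k)) \<longlonglongrightarrow> 0"
    by (simp add: tendsto_cong)
  moreover have "\<forall>k\<ge>0. 1 \<le> f (nk k)" using f by simp
  ultimately have "1 \<le> (0::real)" using LIMSEQ_le_const by blast
  then show False by simp
qed

lemma exp_sum_support_nonempty: "exp_sum B Q n \<noteq> 0 \<Longrightarrow> exp_support B Q \<noteq> {}"
  unfolding exp_sum_def exp_support_def by (auto intro: sum.neutral)

lemma exp_sum_subseq_asymp:
  fixes f :: "nat \<Rightarrow> real"
  assumes B: "finite B" "0 \<notin> B" and rep: "\<And>n. n \<ge> N \<Longrightarrow> complex_of_real (f n) = exp_sum B Q n"
    and f: "\<And>n. f n \<ge> 1" and nk: "strict_mono nk"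
    and G: "(\<lambda>k. dom_part B Q (nk k)) \<longlonglongrightarrow> G" "G \<noteq> 0"
  defines "\<rho> \<equiv> dom_radius B Q" and "D \<equiv> dom_degree B Q"
  shows "asymp_approx (\<lambda>k. f (nk k)) (\<lambda>k. \<rho> ^ nk k * real (nk k) ^ D) \<and> \<rho> \<ge> 1"
proof -
  have supp: "exp_support B Q \<noteq> {}"
    using rep[of N] f[of N] by (intro exp_sum_support_nonempty[of B Q N]) auto
  have \<rho>: "\<rho> > 0" unfolding \<rho>_def by (rule dom_radius_pos[OF B supp])
  have nk_lim: "filterlim nk at_top sequentially" using filterlim_subseq[OF nk] .
  have "eventually (\<lambda>n. exp_sum B Q n / of_real (\<rho> ^ n * real n ^ D) - dom_part B Q n
      = of_real (f n) / of_real (\<rho> ^ n * real n ^ D) - dom_part B Q n) sequentially"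
    by (rule eventually_sequentiallyI[of N]) (simp add: rep)
  with exp_sum_dominant[OF B supp]
  have "(\<lambda>n. of_real (f n) / of_real (\<rho> ^ n * real n ^ D) - dom_part B Q n) \<longlonglongrightarrow> 0"
    unfolding \<rho>_def D_def by (rule Lim_transform_eventually)
  from filterlim_compose[OF this nk_lim]
  have "(\<lambda>k. of_real (f (nk k)) / of_real (\<rho> ^ nk k * real (nk k) ^ D) - dom_part B Q (nk k)
            + dom_part B Q (nk k)) \<longlonglongrightarrow> 0 + G"
    by (intro tendsto_add G(1))
  then have "(\<lambda>k. complex_of_real (f (nk k) / (\<rho> ^ nk k * real (nk k) ^ D))) \<longlonglongrightarrow> G"
    by (simp del: of_real_mult of_real_power)
  then have lim: "(\<lambda>k. f (nk k) / (\<rho> ^ nk k * real (nk k) ^ D)) \<longlonglongrightarrow> Re G \<and> Re G > 0"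
  proof (rule nonneg_real_tendsto_complex[OF _ G(2)])
    show "0 \<le> f (nk k) / (\<rho> ^ nk k * real (nk k) ^ D)" for k
      using f[of "nk k"] \<rho> by (intro divide_nonneg_nonneg) auto
  qed
  then have "\<rho> \<ge> 1"
    using growth_radius_ge_1[of f nk \<rho> D "Re G"] \<rho> nk_lim f by blast
  then show ?thesis using lim unfolding asymp_approx_def by blast
qed

text \<open>Writing \<open>u \<beta> = \<beta>/|\<beta>|\<close>,
  pick \<open>m\<close> where all \<open>\<Sum> lead_coeff (Q \<beta>) u(\<beta>)^m\<close> are nonzero and exponents \<open>q_k\<close> with
  \<open>u(\<beta>)^(q_k) \<rightarrow> 1\<close>; then \<open>n_k = m + q_k\<close> works.\<close>
lemma dom_parts_common_subseq:
  assumes I: "finite I" and B: "finite B" "0 \<notin> B" "nondegenerate B"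
    and supp: "\<And>i. i \<in> I \<Longrightarrow> exp_support B (Q i) \<noteq> {}"
  shows "\<exists>nk. strict_mono nk \<and> (\<forall>i\<in>I. \<exists>G. G \<noteq> 0 \<and> (\<lambda>k. dom_part B (Q i) (nk k)) \<longlonglongrightarrow> G)"
proof -
  define u where "u \<beta> = \<beta> / of_real (norm \<beta>)" for \<beta> :: complex
  have u: "\<forall>\<beta>\<in>B. norm (u \<beta>) = 1" using B(2) unfolding u_def by (auto simp: norm_divide)
  have dom: "\<beta> \<in> B" "norm \<beta> = dom_radius B (Q i)" "Q i \<beta> \<noteq> 0" if "\<beta> \<in> dom_bases B (Q i)" for i \<beta>
    using that unfolding dom_bases_def exp_support_def by auto
  have dom_part_u: "dom_part B (Q i) n = (\<Sum>\<beta>\<in>dom_bases B (Q i). lead_coeff (Q i \<beta>) * u \<beta> ^ n)" for i n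
    unfolding dom_part_def u_def using dom(2) by (intro sum.cong) auto
  have inj: "inj_on (\<lambda>\<beta>. u \<beta> ^ q) (dom_bases B (Q i))" if "q \<ge> 1" for i q
  proof (rule inj_onI)
    fix \<beta> \<beta>' assume b: "\<beta> \<in> dom_bases B (Q i)" "\<beta>' \<in> dom_bases B (Q i)" and e: "u \<beta> ^ q = u \<beta>' ^ q"
    have "\<beta> = of_real (dom_radius B (Q i)) * u \<beta>" "\<beta>' = of_real (dom_radius B (Q i)) * u \<beta>'"
      using dom[OF b(1)] dom[OF b(2)] B(2) unfolding u_def by (auto simp: field_simps)
    then have "\<beta> ^ q = \<beta>' ^ q" using e by (metis power_mult_distrib)
    then show "\<beta> = \<beta>'" using B(3) dom(1)[OF b(1)] dom(1)[OF b(2)] that unfolding nondegenerate_def by blast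
  qed
  have "\<exists>m. \<forall>i\<in>I. (\<Sum>\<beta>\<in>dom_bases B (Q i). lead_coeff (Q i \<beta>) * u \<beta> ^ m) \<noteq> 0"
  proof (rule exp_sums_common_nonzero[OF B(1) u I])
    show "\<forall>i\<in>I. dom_bases B (Q i) \<subseteq> B \<and> dom_bases B (Q i) \<noteq> {}"
      using dom(1) dom_bases_nonempty[OF B(1) supp] by blast
  qed (use dom(3) inj in auto)
  then obtain m where m: "\<forall>i\<in>I. dom_part B (Q i) m \<noteq> 0" unfolding dom_part_u by blast
  obtain qs where qs: "strict_mono qs" and qlim: "\<forall>v\<in>u ` B. (\<lambda>k. v ^ qs k) \<longlonglongrightarrow> 1"
    using unimodular_powers_tendsto_1[of "u ` B"] B(1) u by auto
  have "(\<lambda>k. dom_part B (Q i) (m + qs k)) \<longlonglongrightarrow> dom_part B (Q i) m" for i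
  proof -
    have "(\<lambda>k. \<Sum>\<beta>\<in>dom_bases B (Q i). lead_coeff (Q i \<beta>) * u \<beta> ^ m * u \<beta> ^ qs k)
          \<longlonglongrightarrow> (\<Sum>\<beta>\<in>dom_bases B (Q i). lead_coeff (Q i \<beta>) * u \<beta> ^ m * 1)"
      using qlim dom(1) by (intro tendsto_sum tendsto_mult tendsto_const) auto
    then show ?thesis unfolding dom_part_u by (simp add: power_add mult.assoc)
  qed
  moreover have "strict_mono (\<lambda>k. m + qs k)" using qs unfolding strict_mono_def by simp
  ultimately show ?thesis using m by blast
qed

lemma simultaneous_asymptotics:
  fixes F :: "'i \<Rightarrow> nat \<Rightarrow> real"
  assumes I: "finite I" and B: "finite B" "0 \<notin> B" "nondegenerate B"
    and rep: "\<And>i n. i \<in> I \<Longrightarrow> n \<ge> N \<Longrightarrow> complex_of_real (F i n) = exp_sum B (Q i) n"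
    and F: "\<And>i n. i \<in> I \<Longrightarrow> F i n \<ge> 1"
  shows "\<exists>nk. strict_mono nk \<and> (\<forall>i\<in>I. dom_radius B (Q i) \<ge> 1 \<and>
           asymp_approx (\<lambda>k. F i (nk k)) (\<lambda>k. dom_radius B (Q i) ^ nk k * real (nk k) ^ dom_degree B (Q i)))"
proof -
  have "exp_support B (Q i) \<noteq> {}" if "i \<in> I" for i
    using rep[OF that, of N] F[OF that, of N] by (intro exp_sum_support_nonempty[of B _ N]) auto
  then obtain nk where nk: "strict_mono nk"
    and G: "\<forall>i\<in>I. \<exists>G. G \<noteq> 0 \<and> (\<lambda>k. dom_part B (Q i) (nk k)) \<longlonglongrightarrow> G"
    using dom_parts_common_subseq[OF I B] by blast
  have "dom_radius B (Q i) \<ge> 1 \<and>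
        asymp_approx (\<lambda>k. F i (nk k)) (\<lambda>k. dom_radius B (Q i) ^ nk k * real (nk k) ^ dom_degree B (Q i))"
    if i: "i \<in> I" for i
    using G i exp_sum_subseq_asymp[OF B(1,2) rep[OF i] F[OF i] nk] by blast
  then show ?thesis using nk by blast
qed

lemma residue_classes_asymptotics:
  fixes a :: "'j \<Rightarrow> nat \<Rightarrow> nat"
  assumes J: "finite J" and B: "finite B" "0 \<notin> B" "nondegenerate B"
    and pos: "\<And>j n. j \<in> J \<Longrightarrow> a j n > 0"
    and res: "\<And>j l n. j \<in> J \<Longrightarrow> n \<ge> N \<Longrightarrow> of_nat (a j (p * n + l)) = exp_sum B (Q j l) n"
  shows "\<exists>nk. strict_mono nk \<and> (\<forall>j\<in>J. \<forall>l\<in>{0..p}. dom_radius B (Q j l) \<ge> 1 \<and>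
           asymp_approx (\<lambda>k. real (a j (p * nk k + l)))
             (\<lambda>k. dom_radius B (Q j l) ^ nk k * real (nk k) ^ dom_degree B (Q j l)))"
proof -
  have "\<exists>nk. strict_mono nk \<and> (\<forall>i\<in>J \<times> {0..p}. dom_radius B (Q (fst i) (snd i)) \<ge> 1 \<and>
      asymp_approx (\<lambda>k. real (a (fst i) (p * nk k + snd i)))
        (\<lambda>k. dom_radius B (Q (fst i) (snd i)) ^ nk k * real (nk k) ^ dom_degree B (Q (fst i) (snd i))))"
  proof (rule simultaneous_asymptotics[where F = "\<lambda>i n. real (a (fst i) (p * n + snd i))", OF _ B])
    show "complex_of_real (real (a (fst i) (p * n + snd i))) = exp_sum B (Q (fst i) (snd i)) n"
      if "i \<in> J \<times> {0..p}" "n \<ge> N" for i n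
      using res[of "fst i" n "snd i"] that by auto
    show "1 \<le> real (a (fst i) (p * n + snd i))" if "i \<in> J \<times> {0..p}" for i n
      using pos[of "fst i" "p * n + snd i"] that by (auto simp: Suc_le_eq)
  qed (use J in simp)
  then obtain nk where nk: "strict_mono nk" and asym: "\<forall>i\<in>J \<times> {0..p}. dom_radius B (Q (fst i) (snd i)) \<ge> 1 \<and>
      asymp_approx (\<lambda>k. real (a (fst i) (p * nk k + snd i)))
        (\<lambda>k. dom_radius B (Q (fst i) (snd i)) ^ nk k * real (nk k) ^ dom_degree B (Q (fst i) (snd i)))"
    by blast
  have "dom_radius B (Q j l) \<ge> 1 \<and> asymp_approx (\<lambda>k. real (a j (p * nk k + l)))
          (\<lambda>k. dom_radius B (Q j l) ^ nk k * real (nk k) ^ dom_degree B (Q j l))"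
    if "j \<in> J" "l \<in> {0..p}" for j l
    using asym[rule_format, of "(j, l)"] that by simp
  then show ?thesis using nk by blast
qed

section \<open>Boundedness and growth\<close>

lemma bdd_above_from_residue_classes:
  fixes a :: "nat \<Rightarrow> nat"
  assumes "p \<ge> 1" and bnd: "\<And>l. l < p \<Longrightarrow> \<exists>K. \<forall>n. a (p * n + l) \<le> K"
  shows "bdd_above (range a)"
proof -
  obtain K where K: "\<And>l n. l < p \<Longrightarrow> a (p * n + l) \<le> K l" using bnd by metis
  have "a n \<le> (\<Sum>l<p. K l)" for n
  proof -
    have "a n \<le> K (n mod p)" using K[of "n mod p" "n div p"] assms(1) by simp
    also have "\<dots> \<le> (\<Sum>l<p. K l)" using assms(1) by (intro member_le_sum) auto
    finally show ?thesis .
  qed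
  then show ?thesis by (rule bdd_aboveI2)
qed

text \<open>If every residue class of a positive integer sequence is eventually an exponential sum with
  dominant radius \<open>1\<close> and dominant degree \<open>0\<close>, then the sequence is bounded: it stays within a
  bounded distance of its bounded dominant part.\<close>
lemma bounded_if_no_growth:
  fixes a :: "nat \<Rightarrow> nat"
  assumes p: "p \<ge> 1" and B: "finite B" "0 \<notin> B" and pos: "\<And>n. a n > 0"
    and rep: "\<And>l n. l < p \<Longrightarrow> n \<ge> N \<Longrightarrow> of_nat (a (p * n + l)) = exp_sum B (Q l) n"
    and flat: "\<And>l. l < p \<Longrightarrow> dom_radius B (Q l) = 1 \<and> dom_degree B (Q l) = 0"
  shows "bdd_above (range a)"
proof (rule bdd_above_from_residue_classes[OF p])
  fix l assume l: "l < p"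
  have supp: "exp_support B (Q l) \<noteq> {}"
    using rep[OF l order.refl] pos[of "p * N + l"] by (intro exp_sum_support_nonempty[of B _ N]) auto
  have "(\<lambda>n. exp_sum B (Q l) n - dom_part B (Q l) n) \<longlonglongrightarrow> 0"
    using exp_sum_dominant[OF B supp] flat[OF l] by simp
  moreover have "eventually (\<lambda>n. exp_sum B (Q l) n - dom_part B (Q l) n
      = of_nat (a (p * n + l)) - dom_part B (Q l) n) sequentially"
    by (rule eventually_sequentiallyI[of N]) (simp add: rep[OF l])
  ultimately have "(\<lambda>n. of_nat (a (p * n + l)) - dom_part B (Q l) n) \<longlonglongrightarrow> 0"
    by (rule Lim_transform_eventually)
  then have "Bseq (\<lambda>n. of_nat (a (p * n + l)) - dom_part B (Q l) n)"
    by (intro convergent_imp_Bseq convergentI)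
  then obtain K where K: "\<And>n. norm (of_nat (a (p * n + l)) - dom_part B (Q l) n) \<le> K"
    unfolding Bseq_def by blast
  define M where "M = (\<Sum>\<beta>\<in>dom_bases B (Q l). norm (lead_coeff (Q l \<beta>)))"
  have "real (a (p * n + l)) \<le> K + M" for n
    using K[of n] dom_part_bounded[of B "Q l" n] norm_triangle_ineq2[of "of_nat (a (p * n + l))" "dom_part B (Q l) n"]
      norm_of_nat[of "a (p * n + l)", where 'a = complex] unfolding M_def by linarith
  then have "real (a (p * n + l)) \<le> of_int \<lceil>K + M\<rceil>" for n
    using le_of_int_ceiling order_trans by blast
  then have "int (a (p * n + l)) \<le> \<lceil>K + M\<rceil>" for n
    by (metis of_int_le_iff of_int_of_nat_eq)
  then have "a (p * n + l) \<le> nat \<lceil>K + M\<rceil>" for n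
    by (metis nat_int nat_mono)
  then show "\<exists>K. \<forall>n. a (p * n + l) \<le> K" by blast
qed

lemma unbounded_imp_growing_class:
  fixes a :: "nat \<Rightarrow> nat"
  assumes p: "p \<ge> 1" and B: "finite B" "0 \<notin> B" and pos: "\<And>n. a n > 0"
    and unbdd: "\<not> bdd_above (range a)"
    and rep: "\<And>l n. n \<ge> N \<Longrightarrow> of_nat (a (p * n + l)) = exp_sum B (Q l) n"
    and radius: "\<And>l. l \<in> {0..p} \<Longrightarrow> dom_radius B (Q l) \<ge> 1"
  shows "\<exists>l\<in>{0..p}. dom_radius B (Q l) > 1 \<or> dom_degree B (Q l) \<ge> 1"
proof (rule ccontr)
  assume no_growth: "\<not> ?thesis"
  have flat: "dom_radius B (Q l) = 1 \<and> dom_degree B (Q l) = 0" if "l < p" for l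
  proof -
    have "l \<in> {0..p}" using that by simp
    then have "dom_radius B (Q l) \<ge> 1" "\<not> dom_radius B (Q l) > 1" "\<not> dom_degree B (Q l) \<ge> 1"
      using radius no_growth by auto
    then show ?thesis by simp
  qed
  have "bdd_above (range a)"
    by (rule bounded_if_no_growth[where Q = Q and N = N, OF p B pos]) (use rep flat in auto)
  then show False using unbdd by blast
qed

theorem lemma1:
  fixes d :: nat and a :: "nat \<Rightarrow> nat \<Rightarrow> nat"
  assumes pos: "\<And>j n. j \<in> {1..d} \<Longrightarrow> a j n > 0"
    and unbdd: "\<And>j. j \<in> {1..d} \<Longrightarrow> \<not> bdd_above (range (a j))"
    and rec: "\<And>j. j \<in> {1..d} \<Longrightarrow> lin_rec (\<lambda>n. of_nat (a j n))"
  shows "\<exists>(p::nat) (lam::nat \<Rightarrow> nat \<Rightarrow> real) (e::nat \<Rightarrow> nat \<Rightarrow> nat) (nk::nat \<Rightarrow> nat).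
           p \<ge> 1 \<and> strict_mono nk \<and>
           (\<forall>j\<in>{1..d}. \<forall>l\<in>{0..p}. lam j l \<ge> 1) \<and>
           (\<forall>j\<in>{1..d}. \<forall>l\<in>{0..p}.
              asymp_approx (\<lambda>k. real (a j (p * nk k + l)))
                           (\<lambda>k. lam j l ^ nk k * real (nk k) ^ e j l)) \<and>
           (\<forall>j\<in>{1..d}. \<exists>l\<in>{0..p}. lam j l > 1 \<or> e j l \<ge> 1) \<and>
           (\<forall>j\<in>{1..d}. lam j 0 = lam j p \<and> e j 0 = e j p)"
proof -
  have "\<exists>V P N. finite V \<and> 0 \<notin> V \<and> (\<forall>j\<in>{1..d}. exp_poly_rep (\<lambda>n. of_nat (a j n)) V (P j) N)"
    by (rule exp_poly_common_rep) (simp_all add: rec lin_rec_imp_exp_poly)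
  then obtain V P N where V: "finite V" "0 \<notin> V"
    and rep: "\<And>j. j \<in> {1..d} \<Longrightarrow> exp_poly_rep (\<lambda>n. of_nat (a j n)) V (P j) N"
    by blast
  obtain p where p: "p \<ge> 1" and nondeg: "nondegenerate ((\<lambda>\<nu>. \<nu>^p) ` V)"
    using exists_nondegenerate_power[OF V(1)] by blast
  define B where "B = (\<lambda>\<nu>. \<nu>^p) ` V"
  define Q where "Q j l = residue_poly V (P j) p l" for j l
  have B: "finite B" "0 \<notin> B" "nondegenerate B" using V nondeg unfolding B_def by auto
  have res: "of_nat (a j (p * n + l)) = exp_sum B (Q j l) n" if "j \<in> {1..d}" "n \<ge> N" for j l n
    using exp_poly_rep_residue_class[OF rep[OF that(1)] p that(2)] unfolding B_def Q_def by simp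
  obtain nk where nk: "strict_mono nk" and asym: "\<forall>j\<in>{1..d}. \<forall>l\<in>{0..p}. dom_radius B (Q j l) \<ge> 1 \<and>
      asymp_approx (\<lambda>k. real (a j (p * nk k + l)))
        (\<lambda>k. dom_radius B (Q j l) ^ nk k * real (nk k) ^ dom_degree B (Q j l))"
    using residue_classes_asymptotics[where J = "{1..d}" and N = N and Q = Q, OF _ B pos res] by auto
  have period: "dom_radius B (Q j 0) = dom_radius B (Q j p) \<and> dom_degree B (Q j 0) = dom_degree B (Q j p)" for j
  proof -
    have "Q j p \<beta> = smult \<beta> (Q j 0 \<beta> \<circ>\<^sub>p [:1,1:])" for \<beta>
      unfolding Q_def by (rule residue_poly_period)
    then show ?thesis using dom_data_shift[OF B(2), of "Q j p" "Q j 0"] by simp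
  qed
  have growth: "\<exists>l\<in>{0..p}. dom_radius B (Q j l) > 1 \<or> dom_degree B (Q j l) \<ge> 1" if j: "j \<in> {1..d}" for j
  proof (rule unbounded_imp_growing_class[OF p B(1,2) pos[OF j] unbdd[OF j] res[OF j]])
    show "dom_radius B (Q j l) \<ge> 1" if "l \<in> {0..p}" for l using asym j that by blast
  qed
  show ?thesis
  proof (intro exI[of _ p] exI[of _ "\<lambda>j l. dom_radius B (Q j l)"] exI[of _ "\<lambda>j l. dom_degree B (Q j l)"]
      exI[of _ nk] conjI)
    show "\<forall>j\<in>{1..d}. \<forall>l\<in>{0..p}. 1 \<le> dom_radius B (Q j l)"
      and "\<forall>j\<in>{1..d}. \<forall>l\<in>{0..p}. asymp_approx (\<lambda>k. real (a j (p * nk k + l)))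
             (\<lambda>k. dom_radius B (Q j l) ^ nk k * real (nk k) ^ dom_degree B (Q j l))"
      using asym by auto
  qed (use p nk period growth in auto)
qed

end
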